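(* Let $A$ be a real $n\times n$ matrix acting on $H=\mathbb{R}^n$ (Euclidean inner product $\langle\cdot,\cdot\rangle$, norm $\|\cdot\|$) and let $\lambda$ be a real eigenvalue of $A$. Let $I\subset\mathbb{R}$ be an interval containing $0$ and let $\alpha,\beta:I\to\mathbb{R}$ be continuous, differentiable at $0$, and $u:I\to H$ continuous at $0$ with $\|u(t)\|=1$, such that for every $t\in I$, $$Au(t)=\alpha(t)u(t)^+-\beta(t)u(t)^-,$$ $\alpha(t)\neq\beta(t)$ for $t\neq 0$, $(\alpha(0),\beta(0))=(\lambda,\lambda)$ and $u(0)=u_0$. Then necessarily $u_0\in\operatorname{Ker}(A-\lambda I)$, $u_0\neq 0$, and $$\alpha'(0)\,\langle u_0^+,v\rangle=\beta'(0)\,\langle u_0^-,v\rangle\quad\text{for all } v\in\operatorname{Ker}(A^*-\lambda I).$$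
   Context: $A^*$ is the transpose of $A$. For $u\in\mathbb{R}^n$, $u^+$ and $u^-$ are defined componentwise by $u_i^+=\max\{u_i,0\}$, $u_i^-=\max\{-u_i,0\}$, so $u=u^+-u^-$. A pair $(\alpha,\beta)$ for which $Au=\alpha u^+-\beta u^-$ has a nontrivial solution belongs to the Fučík spectrum of $A$; $(\alpha(t),\beta(t))$ is a (continuous) Fučík curve with Fučík eigenvectors $u(t)$. *)

theory Defs
  imports "HOL-Analysis.Analysis"
begin

definition pos_part :: "real ^ 'n \<Rightarrow> real ^ 'n" where
  "pos_part u = (\<chi> i. max (u $ i) 0)"

definition neg_part :: "real ^ 'n \<Rightarrow> real ^ 'n" where
  "neg_part u = (\<chi> i. max (- (u $ i)) 0)"

end

theory Submission
  imports Defs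
begin

text \<open>Pairing the Fucik equation for \<open>u(t)\<close> with an eigenvector \<open>v\<close> of \<open>A\<^sup>*\<close> gives
  \<open>(\<alpha>(t) - \<lambda>)\<langle>u(t)\<^sup>+,v\<rangle> = (\<beta>(t) - \<lambda>)\<langle>u(t)\<^sup>-,v\<rangle>\<close> for every \<open>t\<close>. Both factors
  \<open>\<alpha>(t) - \<lambda>\<close> and \<open>\<beta>(t) - \<lambda>\<close> vanish at \<open>t = 0\<close>; dividing by \<open>t\<close> and letting \<open>t \<rightarrow> 0\<close>
  turns them into \<open>\<alpha>'(0)\<close> and \<open>\<beta>'(0)\<close>, while \<open>u(t)\<^sup>\<plusminus> \<rightarrow> u\<^sub>0\<^sup>\<plusminus>\<close> by continuity.\<close>

lemma pos_part_minus_neg_part: "pos_part x - neg_part x = (x :: real ^ 'n)"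
  unfolding pos_part_def neg_part_def by (simp add: vec_eq_iff max_def)

lemma tendsto_pos_part:
  "(f \<longlongrightarrow> a) F \<Longrightarrow> ((\<lambda>t. pos_part (f t)) \<longlongrightarrow> pos_part a) F"
  unfolding pos_part_def by (intro tendsto_intros tendsto_vec_nth)

lemma tendsto_neg_part:
  "(f \<longlongrightarrow> a) F \<Longrightarrow> ((\<lambda>t. neg_part (f t)) \<longlongrightarrow> neg_part a) F"
  unfolding neg_part_def by (intro tendsto_intros tendsto_vec_nth)

lemma inner_matrix_vector_mult_transpose:
  fixes A :: "real ^ 'n ^ 'm"
  shows "(A *v x) \<bullet> y = x \<bullet> (transpose A *v y)"
  by (metis dot_lmul_matrix inner_commute vector_transpose_matrix)

lemma fucik_inner_adjoint_eigenvector: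
  fixes A :: "real ^ 'n ^ 'n"
  assumes "A *v u = a *\<^sub>R pos_part u - b *\<^sub>R neg_part u"
    and "transpose A *v v = lam *\<^sub>R v"
  shows "(a - lam) * (pos_part u \<bullet> v) = (b - lam) * (neg_part u \<bullet> v)"
proof -
  have "a * (pos_part u \<bullet> v) - b * (neg_part u \<bullet> v) = (A *v u) \<bullet> v"
    using assms(1) by (simp add: inner_diff_left)
  also have "\<dots> = lam * (u \<bullet> v)"
    using assms(2) by (simp add: inner_matrix_vector_mult_transpose)
  also have "u \<bullet> v = pos_part u \<bullet> v - neg_part u \<bullet> v"
    by (metis inner_diff_left pos_part_minus_neg_part)
  finally show ?thesis by (simp add: algebra_simps)
qed

lemma is_interval_islimpt:
  fixes I :: "'a :: euclidean_space set"
  assumes "is_interval I" "a \<in> I" "t \<in> I" "t \<noteq> a"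
  shows "a islimpt I"
  using assms by (intro connected_imp_perfect is_interval_connected) auto

lemma has_real_derivative_balance:
  assumes f: "(f has_real_derivative f') (at a within S)" "f a = 0"
    and g: "(g has_real_derivative g') (at a within S)" "g a = 0"
    and p: "(p \<longlongrightarrow> p0) (at a within S)"
    and q: "(q \<longlongrightarrow> q0) (at a within S)"
    and balance: "\<And>t. t \<in> S \<Longrightarrow> f t * p t = g t * q t"
    and "a islimpt S"
  shows "f' * p0 = g' * q0"
proof -
  define h where "h t = f t / (t - a) * p t - g t / (t - a) * q t" for t
  have "(h \<longlongrightarrow> f' * p0 - g' * q0) (at a within S)"
    using f g unfolding h_def has_field_derivative_iff by (intro tendsto_intros p q) auto
  moreover have "h t = 0" if "t \<in> S" for t
    using balance[OF that] by (simp add: h_def divide_simps)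
  then have "(h \<longlongrightarrow> 0) (at a within S)"
    by (intro Lim_transform_within[OF tendsto_const, of 1]) auto
  moreover have "at a within S \<noteq> bot"
    using \<open>a islimpt S\<close> by (simp add: trivial_limit_within)
  ultimately show ?thesis
    using tendsto_unique by fastforce
qed

theorem theorem2:
  fixes A :: "real ^ 'n ^ 'n" and lam :: real and I :: "real set"
    and \<alpha> \<beta> :: "real \<Rightarrow> real" and u :: "real \<Rightarrow> real ^ 'n"
    and u0 :: "real ^ 'n" and \<alpha>' \<beta>' :: real
  assumes eig: "\<exists>x. x \<noteq> 0 \<and> A *v x = lam *\<^sub>R x"
    and I: "is_interval I" "0 \<in> I" "\<exists>t\<in>I. t \<noteq> 0"
    and cont: "continuous_on I \<alpha>" "continuous_on I \<beta>"
    and der: "(\<alpha> has_real_derivative \<alpha>') (at 0 within I)"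
             "(\<beta> has_real_derivative \<beta>') (at 0 within I)"
    and ucont: "continuous (at 0 within I) u"
    and unorm: "\<And>t. t \<in> I \<Longrightarrow> norm (u t) = 1"
    and fucik: "\<And>t. t \<in> I \<Longrightarrow>
                  A *v u t = \<alpha> t *\<^sub>R pos_part (u t) - \<beta> t *\<^sub>R neg_part (u t)"
    and neq: "\<And>t. t \<in> I \<Longrightarrow> t \<noteq> 0 \<Longrightarrow> \<alpha> t \<noteq> \<beta> t"
    and at0: "\<alpha> 0 = lam" "\<beta> 0 = lam" "u 0 = u0"
  shows "A *v u0 = lam *\<^sub>R u0 \<and> u0 \<noteq> 0 \<and>
         (\<forall>v. transpose A *v v = lam *\<^sub>R v \<longrightarrow>
              \<alpha>' * (pos_part u0 \<bullet> v) = \<beta>' * (neg_part u0 \<bullet> v))"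
proof (intro conjI allI impI)
  show "A *v u0 = lam *\<^sub>R u0"
    using fucik[OF I(2)] at0
    by (simp add: scaleR_diff_right[symmetric] pos_part_minus_neg_part)
  show "u0 \<noteq> 0"
    using unorm[OF I(2)] at0 by auto
  fix v assume v: "transpose A *v v = lam *\<^sub>R v"
  have u: "(u \<longlongrightarrow> u0) (at 0 within I)"
    using ucont at0 by (simp add: continuous_within)
  show "\<alpha>' * (pos_part u0 \<bullet> v) = \<beta>' * (neg_part u0 \<bullet> v)"
  proof (rule has_real_derivative_balance)
    show "((\<lambda>t. \<alpha> t - lam) has_real_derivative \<alpha>') (at 0 within I)"
      "((\<lambda>t. \<beta> t - lam) has_real_derivative \<beta>') (at 0 within I)"
      using der by (auto intro!: derivative_eq_intros)
    show "0 islimpt I"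
      using I by (auto intro: is_interval_islimpt)
    show "(\<alpha> t - lam) * (pos_part (u t) \<bullet> v) = (\<beta> t - lam) * (neg_part (u t) \<bullet> v)"
      if "t \<in> I" for t
      using fucik[OF that] v by (rule fucik_inner_adjoint_eigenvector)
  qed (use at0 u in \<open>auto intro: tendsto_inner tendsto_pos_part tendsto_neg_part\<close>)
qed

end
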